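(* Let $k\ge 1$ and let $G$ be a finite abelian group with prime-power decomposition $G\cong\bigoplus_i (\mathbb{Z}_{p_i^{r_i}})^{d_i}$, where the pairs $(p_i,r_i)$ are pairwise distinct, $p_i$ prime, $r_i\ge 1$, $d_i\ge 1$. Suppose at least one of the following holds: (1) for every $i$ with $p_i=2$ or $p_i=3$ one has $d_i\ge 2$ (no condition for $p_i>3$; $k$ arbitrary); (2) no $p_i$ equals $2$, and $k$ is even; (3) for every $i$ with $p_i=2$ one has $d_i\ge 2$, and $k=4s$ for some positive integer $s$. Then the restricted wreath product $G\wr\mathbb{Z}^k$ admits an automorphism $\varphi$ with $R(\varphi)<\infty$; i.e. $G\wr\mathbb{Z}^k$ does not have the $R_\infty$ property.
   Context: For a group $\Gamma$ and an endomorphism $\varphi$, elements $x,y\in\Gamma$ are $\varphi$-conjugate (twisted conjugate) if $y=gx\varphi(g^{-1})$ for some $g\in\Gamma$; the equivalence classes are Reidemeister classes and their number $R(\varphi)\in\{1,2,\dots\}\cup\{\infty\}$ is the Reidemeister number. A group has the $R_\infty$ property if every automorphism has $R(\varphi)=\infty$. The restricted wreath product is $G\wr\mathbb{Z}^k=\Sigma\rtimes_\alpha\mathbb{Z}^k$, where $\Sigma=\bigoplus_{x\in\mathbb{Z}^k}G_x$ with each $G_x$ a copy of $G$ (for $g\in G$, $g_x$ denotes $g$ in $G_x$), and $\alpha(x)(g_y)=g_{x+y}$. *)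

theory Defs
  imports "HOL-Algebra.Algebra" "HOL-Library.Extended_Nat"
begin

definition Zk :: "nat \<Rightarrow> (nat \<Rightarrow> int) set" where
  "Zk k = {x. \<forall>i\<ge>k. x i = 0}"

text \<open>Restricted wreath product G wr Z^k = Sigma \<rtimes>_alpha Z^k.
  An element of Sigma = direct sum of copies G_x (x in Z^k) is a finitely supported
  function sigma : Z^k -> carrier G (extended by the unit outside Z^k).
  alpha(x) shifts: (alpha(x) tau)(z) = tau(z - x), so alpha(x)(g_y) = g_(x+y).\<close>
definition wreath_Zk :: "('a, 'b) monoid_scheme \<Rightarrow> nat \<Rightarrow> (((nat \<Rightarrow> int) \<Rightarrow> 'a) \<times> (nat \<Rightarrow> int)) monoid" where
  "wreath_Zk G k =
     \<lparr>carrier = {(\<sigma>, x). x \<in> Zk k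
                   \<and> (\<forall>z\<in>Zk k. \<sigma> z \<in> carrier G)
                   \<and> (\<forall>z. z \<notin> Zk k \<longrightarrow> \<sigma> z = \<one>\<^bsub>G\<^esub>)
                   \<and> finite {z. \<sigma> z \<noteq> \<one>\<^bsub>G\<^esub>}},
      monoid.mult = (\<lambda>(\<sigma>, x) (\<tau>, y). (\<lambda>z. \<sigma> z \<otimes>\<^bsub>G\<^esub> \<tau> (\<lambda>i. z i - x i), \<lambda>i. x i + y i)),
      one = (\<lambda>z. \<one>\<^bsub>G\<^esub>, \<lambda>i. 0)\<rparr>"

definition twisted_conj :: "('a, 'b) monoid_scheme \<Rightarrow> ('a \<Rightarrow> 'a) \<Rightarrow> ('a \<times> 'a) set" where
  "twisted_conj G \<phi> = {(x, y). x \<in> carrier G \<and> y \<in> carrier G \<and>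
      (\<exists>g\<in>carrier G. y = g \<otimes>\<^bsub>G\<^esub> x \<otimes>\<^bsub>G\<^esub> \<phi> (inv\<^bsub>G\<^esub> g))}"

definition reidemeister_classes :: "('a, 'b) monoid_scheme \<Rightarrow> ('a \<Rightarrow> 'a) \<Rightarrow> 'a set set" where
  "reidemeister_classes G \<phi> = carrier G // twisted_conj G \<phi>"

definition reidemeister_number :: "('a, 'b) monoid_scheme \<Rightarrow> ('a \<Rightarrow> 'a) \<Rightarrow> enat" where
  "reidemeister_number G \<phi> =
     (if finite (reidemeister_classes G \<phi>) then enat (card (reidemeister_classes G \<phi>)) else \<infinity>)"

definition prime_power_group :: "(nat \<times> nat \<times> nat) list \<Rightarrow> (nat \<times> nat \<Rightarrow> int) monoid" where
  "prime_power_group ds =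
     product_group {(i, j). i < length ds \<and> j < snd (snd (ds ! i))}
       (\<lambda>(i, j). integer_mod_group (fst (ds ! i) ^ fst (snd (ds ! i))))"

end

theory Submission
  imports Defs "HOL-Library.Function_Algebras"
begin

text \<open>
  Choose an automorphism M of Z^k with M^n = 1 and 1 + M + ... + M^(n-1) = 0 (block diagonal
  with companion matrices of 1 + t + ... + t^(n-1) for n = 2, 3, 5, which needs n - 1 to divide k),
  and an automorphism A of G such that A^n fixes only the identity (built on each homocyclic
  component from scalars and Fibonacci-type blocks; this is where the conditions on p and d enter).
  Then phi(sigma, x) = (A \<circ> sigma \<circ> M^-1, M x) is an automorphism of G wr Z^k.
  Twisted conjugation by (1, y) replaces the base point x by x + y - M y, and the image of 1 - M
  contains n Z^k, so every Reidemeister class meets a base point in {0, ..., n - 1}^k.  Over a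
  fixed base point the coefficient sigma can be removed altogether: the affine map
  z \<mapsto> M^-1 (z - x) has order dividing n, and along its orbits the twisted conjugacy equation
  reduces to g (A^n g)^-1 = h, which is solvable because g \<mapsto> g (A^n g)^-1 is injective on the
  finite group G.  Hence R(phi) \<le> n^k.
\<close>

section \<open>Wreath products and Reidemeister classes\<close>

lemma Zk_add [intro]: "x \<in> Zk k \<Longrightarrow> y \<in> Zk k \<Longrightarrow> x + y \<in> Zk k"
  by (simp add: Zk_def)

lemma Zk_diff [intro]: "x \<in> Zk k \<Longrightarrow> y \<in> Zk k \<Longrightarrow> x - y \<in> Zk k"
  by (simp add: Zk_def)

lemma Zk_uminus [intro]: "x \<in> Zk k \<Longrightarrow> - x \<in> Zk k"
  by (simp add: Zk_def)

lemma Zk_zero [simp, intro]: "0 \<in> Zk k"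
  by (simp add: Zk_def)

lemma Zk_diff_iff: "x \<in> Zk k \<Longrightarrow> z - x \<in> Zk k \<longleftrightarrow> z \<in> Zk k"
  by (auto simp: Zk_def)

lemma Zk_sum: "(\<And>j. j \<in> J \<Longrightarrow> f j \<in> Zk k) \<Longrightarrow> sum f J \<in> Zk k"
  by (induction J rule: infinite_finite_induct) auto

lemma finite_support_shift:
  fixes f :: "('i::ab_group_add) \<Rightarrow> 'a"
  assumes "finite {z. f z \<noteq> c}"
  shows "finite {z. f (z - x) \<noteq> c}"
proof -
  have "{z. f (z - x) \<noteq> c} = (\<lambda>w. w + x) ` {z. f z \<noteq> c}"
    by (auto simp: image_iff) (metis diff_add_cancel)
  then show ?thesis
    using assms by simp
qed

lemma wreath_carrier:
  "(\<sigma>, x) \<in> carrier (wreath_Zk G k) \<longleftrightarrow> x \<in> Zk k \<and> (\<forall>z\<in>Zk k. \<sigma> z \<in> carrier G)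
     \<and> (\<forall>z. z \<notin> Zk k \<longrightarrow> \<sigma> z = \<one>\<^bsub>G\<^esub>) \<and> finite {z. \<sigma> z \<noteq> \<one>\<^bsub>G\<^esub>}"
  by (simp add: wreath_Zk_def)

lemma wreath_mult:
  "(\<sigma>, x) \<otimes>\<^bsub>wreath_Zk G k\<^esub> (\<tau>, y) = (\<lambda>z. \<sigma> z \<otimes>\<^bsub>G\<^esub> \<tau> (z - x), x + y)"
  by (simp add: wreath_Zk_def fun_diff_def plus_fun_def)

lemma wreath_one: "\<one>\<^bsub>wreath_Zk G k\<^esub> = (\<lambda>z. \<one>\<^bsub>G\<^esub>, 0)"
  by (simp add: wreath_Zk_def zero_fun_def)

context group
begin

lemma wreath_carrier_val: "(\<sigma>, x) \<in> carrier (wreath_Zk G k) \<Longrightarrow> \<sigma> z \<in> carrier G"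
  by (cases "z \<in> Zk k") (auto simp: wreath_carrier)

lemma wreath_mult_closed:
  assumes a: "(\<sigma>, x) \<in> carrier (wreath_Zk G k)" and b: "(\<tau>, y) \<in> carrier (wreath_Zk G k)"
  shows "(\<lambda>z. \<sigma> z \<otimes> \<tau> (z - x), x + y) \<in> carrier (wreath_Zk G k)"
proof -
  have x: "x \<in> Zk k" and y: "y \<in> Zk k"
    using a b by (auto simp: wreath_carrier)
  have "{z. \<sigma> z \<otimes> \<tau> (z - x) \<noteq> \<one>} \<subseteq> {z. \<sigma> z \<noteq> \<one>} \<union> {z. \<tau> (z - x) \<noteq> \<one>}"
    by auto
  moreover have "finite {z. \<tau> (z - x) \<noteq> \<one>}"
    using b by (intro finite_support_shift) (simp add: wreath_carrier)
  ultimately have "finite {z. \<sigma> z \<otimes> \<tau> (z - x) \<noteq> \<one>}"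
    using a by (auto simp: wreath_carrier intro: finite_subset)
  then show ?thesis
    using a b x y wreath_carrier_val[OF a] wreath_carrier_val[OF b]
    by (auto simp: wreath_carrier Zk_diff_iff)
qed

lemma wreath_inverse:
  assumes a: "(\<sigma>, x) \<in> carrier (wreath_Zk G k)"
  shows "(\<lambda>z. inv (\<sigma> (z + x)), - x) \<in> carrier (wreath_Zk G k)"
    and "(\<lambda>z. inv (\<sigma> (z + x)), - x) \<otimes>\<^bsub>wreath_Zk G k\<^esub> (\<sigma>, x) = \<one>\<^bsub>wreath_Zk G k\<^esub>"
proof -
  have x: "x \<in> Zk k"
    using a by (simp add: wreath_carrier)
  have "{z. inv (\<sigma> (z + x)) \<noteq> \<one>} = {z. \<sigma> (z - - x) \<noteq> \<one>}"
    using wreath_carrier_val[OF a] by (auto simp: inv_eq_1_iff)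
  moreover have "finite {z. \<sigma> (z - - x) \<noteq> \<one>}"
    using a by (intro finite_support_shift) (simp add: wreath_carrier)
  moreover have "\<sigma> (z + x) = \<one>" if "z \<notin> Zk k" for z
  proof -
    have "z + x \<notin> Zk k"
      using that Zk_diff[OF _ x, of "z + x"] by auto
    then show ?thesis
      using a by (simp add: wreath_carrier)
  qed
  ultimately show "(\<lambda>z. inv (\<sigma> (z + x)), - x) \<in> carrier (wreath_Zk G k)"
    using a x wreath_carrier_val[OF a] by (auto simp: wreath_carrier)
  show "(\<lambda>z. inv (\<sigma> (z + x)), - x) \<otimes>\<^bsub>wreath_Zk G k\<^esub> (\<sigma>, x) = \<one>\<^bsub>wreath_Zk G k\<^esub>"
    using wreath_carrier_val[OF a] by (simp add: wreath_mult wreath_one)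
qed

lemma group_wreath_Zk: "group (wreath_Zk G k)"
proof (rule groupI)
  fix a b c
  assume a: "a \<in> carrier (wreath_Zk G k)" and b: "b \<in> carrier (wreath_Zk G k)"
    and c: "c \<in> carrier (wreath_Zk G k)"
  obtain \<sigma> x \<tau> y \<rho> w where abc: "a = (\<sigma>, x)" "b = (\<tau>, y)" "c = (\<rho>, w)"
    by (metis surj_pair)
  show "a \<otimes>\<^bsub>wreath_Zk G k\<^esub> b \<in> carrier (wreath_Zk G k)"
    using wreath_mult_closed a b by (simp add: abc wreath_mult)
  show "a \<otimes>\<^bsub>wreath_Zk G k\<^esub> b \<otimes>\<^bsub>wreath_Zk G k\<^esub> c
      = a \<otimes>\<^bsub>wreath_Zk G k\<^esub> (b \<otimes>\<^bsub>wreath_Zk G k\<^esub> c)"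
    using a b c wreath_carrier_val
    by (simp add: abc wreath_mult m_assoc add.assoc diff_diff_eq)
next
  show "\<one>\<^bsub>wreath_Zk G k\<^esub> \<in> carrier (wreath_Zk G k)"
    by (simp add: wreath_one wreath_carrier)
next
  fix a
  assume a: "a \<in> carrier (wreath_Zk G k)"
  obtain \<sigma> x where ax: "a = (\<sigma>, x)"
    by fastforce
  show "\<one>\<^bsub>wreath_Zk G k\<^esub> \<otimes>\<^bsub>wreath_Zk G k\<^esub> a = a"
    using a wreath_carrier_val by (simp add: ax wreath_one wreath_mult)
  show "\<exists>b\<in>carrier (wreath_Zk G k). b \<otimes>\<^bsub>wreath_Zk G k\<^esub> a = \<one>\<^bsub>wreath_Zk G k\<^esub>"
    using wreath_inverse a unfolding ax by blast
qed

end

lemma equiv_twisted_conj: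
  assumes W: "group W" and h: "\<phi> \<in> hom W W"
  shows "equiv (carrier W) (twisted_conj W \<phi>)"
proof -
  interpret group_hom W W \<phi>
    using W h by (simp add: group_hom_def group_hom_axioms_def)
  show ?thesis
  proof (rule equivI)
    show "refl_on (carrier W) (twisted_conj W \<phi>)"
      unfolding refl_on_def twisted_conj_def by (auto intro!: bexI[of _ "\<one>\<^bsub>W\<^esub>"])
    show "sym (twisted_conj W \<phi>)"
    proof (rule symI)
      fix a b
      assume "(a, b) \<in> twisted_conj W \<phi>"
      then obtain g where a: "a \<in> carrier W" and b: "b \<in> carrier W" and g: "g \<in> carrier W"
        and b_eq: "b = g \<otimes>\<^bsub>W\<^esub> a \<otimes>\<^bsub>W\<^esub> \<phi> (inv\<^bsub>W\<^esub> g)"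
        unfolding twisted_conj_def by auto
      have "a = inv\<^bsub>W\<^esub> g \<otimes>\<^bsub>W\<^esub> b \<otimes>\<^bsub>W\<^esub> \<phi> (inv\<^bsub>W\<^esub> (inv\<^bsub>W\<^esub> g))"
        using a g by (simp add: b_eq hom_inv G.m_assoc) (simp add: G.m_assoc[symmetric])
      then show "(b, a) \<in> twisted_conj W \<phi>"
        unfolding twisted_conj_def using a b g by (auto intro!: bexI[of _ "inv\<^bsub>W\<^esub> g"])
    qed
    show "trans (twisted_conj W \<phi>)"
    proof (rule transI)
      fix a b c
      assume "(a, b) \<in> twisted_conj W \<phi>" "(b, c) \<in> twisted_conj W \<phi>"
      then obtain g h where a: "a \<in> carrier W" and c: "c \<in> carrier W"
        and g: "g \<in> carrier W" and h: "h \<in> carrier W"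
        and b_eq: "b = g \<otimes>\<^bsub>W\<^esub> a \<otimes>\<^bsub>W\<^esub> \<phi> (inv\<^bsub>W\<^esub> g)"
        and c_eq: "c = h \<otimes>\<^bsub>W\<^esub> b \<otimes>\<^bsub>W\<^esub> \<phi> (inv\<^bsub>W\<^esub> h)"
        unfolding twisted_conj_def by auto
      have "c = (h \<otimes>\<^bsub>W\<^esub> g) \<otimes>\<^bsub>W\<^esub> a \<otimes>\<^bsub>W\<^esub> \<phi> (inv\<^bsub>W\<^esub> (h \<otimes>\<^bsub>W\<^esub> g))"
        using a g h by (simp add: c_eq b_eq G.inv_mult_group G.m_assoc)
      then show "(a, c) \<in> twisted_conj W \<phi>"
        unfolding twisted_conj_def using a c g h by (auto intro!: bexI[of _ "h \<otimes>\<^bsub>W\<^esub> g"])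
    qed
    show "twisted_conj W \<phi> \<subseteq> carrier W \<times> carrier W"
      by (auto simp: twisted_conj_def)
  qed
qed

lemma reidemeister_number_finiteI:
  assumes W: "group W" and h: "\<phi> \<in> hom W W" and S: "finite S"
    and cover: "\<And>w. w \<in> carrier W \<Longrightarrow> \<exists>s\<in>S. (w, s) \<in> twisted_conj W \<phi>"
  shows "reidemeister_number W \<phi> < \<infinity>"
proof -
  have eq: "equiv (carrier W) (twisted_conj W \<phi>)"
    by (rule equiv_twisted_conj[OF W h])
  have "reidemeister_classes W \<phi> \<subseteq> (\<lambda>s. twisted_conj W \<phi> `` {s}) ` S"
  proof
    fix C
    assume "C \<in> reidemeister_classes W \<phi>"
    then obtain w where w: "w \<in> carrier W" and C: "C = twisted_conj W \<phi> `` {w}"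
      unfolding reidemeister_classes_def quotient_def by auto
    obtain s where "s \<in> S" and "(w, s) \<in> twisted_conj W \<phi>"
      using cover[OF w] by auto
    with C eq show "C \<in> (\<lambda>s. twisted_conj W \<phi> `` {s}) ` S"
      by (auto simp: equiv_class_eq)
  qed
  then have "finite (reidemeister_classes W \<phi>)"
    using S finite_surj by blast
  then show ?thesis
    by (simp add: reidemeister_number_def)
qed

section \<open>Cyclotomic automorphisms of Z^k\<close>

lemma fun_sum_apply: "sum f A i = (\<Sum>a\<in>A. f a i)"
  by (induction A rule: infinite_finite_induct) auto

definition Zk_residues :: "nat \<Rightarrow> nat \<Rightarrow> (nat \<Rightarrow> int) set" where
  "Zk_residues k n = {r \<in> Zk k. \<forall>i. 0 \<le> r i \<and> r i < int n}"

lemma finite_Zk_residues: "finite (Zk_residues k n)"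
proof -
  have "Zk_residues k n \<subseteq> {r. \<forall>i. (i \<in> {..<k} \<longrightarrow> r i \<in> {0..<int n}) \<and> (i \<notin> {..<k} \<longrightarrow> r i = 0)}"
    by (auto simp: Zk_residues_def Zk_def)
  then show ?thesis
    by (rule finite_subset) (intro finite_set_of_finite_funs; simp)
qed

locale cyclotomic_map = additive M for M :: "(nat \<Rightarrow> int) \<Rightarrow> (nat \<Rightarrow> int)" +
  fixes k n :: nat
  assumes order_pos: "0 < n"
    and maps_Zk: "M x \<in> Zk k"
    and funpow_order: "x \<in> Zk k \<Longrightarrow> (M ^^ n) x = x"
    and sum_funpow: "x \<in> Zk k \<Longrightarrow> (\<Sum>j<n. (M ^^ j) x) = 0"
begin

lemma additive_funpow: "additive (M ^^ j)"
  by (induction j) (simp_all add: additive_def add)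

lemma funpow_Zk: "x \<in> Zk k \<Longrightarrow> (M ^^ j) x \<in> Zk k"
  by (cases j) (simp_all add: maps_Zk)

definition M_inv :: "(nat \<Rightarrow> int) \<Rightarrow> (nat \<Rightarrow> int)" where
  "M_inv = M ^^ (n - 1)"

lemma M_inv_Zk: "x \<in> Zk k \<Longrightarrow> M_inv x \<in> Zk k"
  by (simp add: M_inv_def funpow_Zk)

lemma M_inv_M: "x \<in> Zk k \<Longrightarrow> M_inv (M x) = x"
  using funpow_order order_pos by (metis Suc_diff_1 comp_apply funpow_Suc_right M_inv_def)

lemma M_M_inv: "x \<in> Zk k \<Longrightarrow> M (M_inv x) = x"
  using funpow_order order_pos by (metis Suc_diff_1 comp_apply funpow.simps(2) M_inv_def)

lemma M_inv_diff: "z \<in> Zk k \<Longrightarrow> x \<in> Zk k \<Longrightarrow> M_inv (z - M x) = M_inv z - x"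
  using additive.diff[OF additive_funpow] M_inv_M by (simp add: M_inv_def)

lemma inj_on_Zk: "inj_on M (Zk k)"
  by (metis inj_onI M_inv_M)

lemma inj_on_M_inv_Zk: "inj_on M_inv (Zk k)"
  by (metis inj_onI M_M_inv)

lemma bij_betw_affine_inverse:
  assumes "c \<in> Zk k"
  shows "bij_betw (\<lambda>z. M_inv (z - c)) (Zk k) (Zk k)"
  by (rule bij_betw_byWitness[where f' = "\<lambda>z. M z + c"])
    (use assms in \<open>auto simp: M_inv_M M_M_inv M_inv_Zk maps_Zk Zk_diff\<close>)

lemma affine_funpow: "((\<lambda>z. M z + c) ^^ j) z = (M ^^ j) z + (\<Sum>i<j. (M ^^ i) c)"
proof (induction j)
  case (Suc j)
  have "((\<lambda>z. M z + c) ^^ Suc j) z = M ((M ^^ j) z + (\<Sum>i<j. (M ^^ i) c)) + c"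
    by (simp only: funpow.simps comp_apply Suc.IH)
  also have "\<dots> = (M ^^ Suc j) z + ((\<Sum>i<j. (M ^^ Suc i) c) + c)"
    by (simp add: add sum add.assoc)
  also have "(\<Sum>i<j. (M ^^ Suc i) c) + c = (\<Sum>i<Suc j. (M ^^ i) c)"
    by (simp only: sum.lessThan_Suc_shift) (simp add: add.commute)
  finally show ?case .
qed simp

text \<open>This is the inverse of z \<mapsto> M z + c, whose n-th power is
  z \<mapsto> M^n z + (1 + M + ... + M^(n-1)) c.\<close>
lemma affine_inverse_funpow_order:
  assumes c: "c \<in> Zk k" and z: "z \<in> Zk k"
  shows "((\<lambda>z. M_inv (z - c)) ^^ n) z = z"
proof -
  let ?S = "\<lambda>z. M z + c" and ?T = "\<lambda>z. M_inv (z - c)"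
  have S_Zk: "?S w \<in> Zk k" for w
    using c maps_Zk by blast
  have "(?T ^^ j) ((?S ^^ j) w) = w" if "w \<in> Zk k" for j w
    using that
  proof (induction j arbitrary: w)
    case (Suc j)
    have "(?T ^^ Suc j) ((?S ^^ Suc j) w) = ?T ((?T ^^ j) ((?S ^^ j) (?S w)))"
      by (simp only: funpow.simps(2) comp_apply funpow_swap1[of ?S])
    also have "\<dots> = ?T (?S w)"
      using Suc.IH[OF S_Zk] by (rule arg_cong)
    also have "\<dots> = w"
      using Suc.prems by (simp add: M_inv_M)
    finally show ?case .
  qed simp
  moreover have "(?S ^^ n) z = z"
    using z c by (simp add: affine_funpow funpow_order sum_funpow)
  ultimately show ?thesis
    using z by metis
qed

text \<open>Since (1 - t)(n + (n-1) t + ... + t^(n-1)) = n modulo t^n - 1 and 1 + t + ... + t^(n-1),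
  the image of id - M contains n Z^k.\<close>
lemma residue_representative:
  assumes x: "x \<in> Zk k"
  shows "\<exists>y\<in>Zk k. x + y - M y \<in> Zk_residues k n"
proof -
  define q where "q = (\<lambda>i. x i div int n)"
  define P where "P = (\<Sum>j<n. \<Sum>i<Suc j. (M ^^ i) q)"
  have q: "q \<in> Zk k"
    using x by (simp add: q_def Zk_def)
  have "P - M P = (\<Sum>j<n. \<Sum>i<Suc j. (M ^^ i) q - (M ^^ Suc i) q)"
    by (simp only: P_def sum sum_subtractf funpow.simps comp_apply)
  also have "\<dots> = (\<Sum>j<n. q) - (\<Sum>j<n. (M ^^ Suc j) q)"
    unfolding sum_lessThan_telescope'[of "\<lambda>i. (M ^^ i) q"] by (simp only: sum_subtractf funpow_0 id_apply)
  also have "(\<Sum>j<n. (M ^^ Suc j) q) = 0"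
    using sum.lessThan_Suc_shift[of "\<lambda>j. (M ^^ j) q" n] q
    by (simp add: sum_funpow funpow_order)
  finally have PM: "P - M P = (\<lambda>i. int n * q i)"
    by (simp add: fun_eq_iff fun_sum_apply)
  have P: "P \<in> Zk k"
    unfolding P_def by (intro Zk_sum funpow_Zk q)
  have "x + - P - M (- P) = (\<lambda>i. x i mod int n)"
    using PM by (auto simp: minus fun_eq_iff q_def algebra_simps minus_div_mult_eq_mod[symmetric])
  moreover have "(\<lambda>i. x i mod int n) \<in> Zk_residues k n"
    using x order_pos by (simp add: Zk_residues_def Zk_def)
  ultimately show ?thesis
    using P by (metis Zk_uminus)
qed

end

definition block :: "nat \<Rightarrow> (nat \<Rightarrow> int) \<Rightarrow> nat \<Rightarrow> nat \<Rightarrow> int" where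
  "block b x q = (\<lambda>t. if t < b then x (b * q + t) else 0)"

definition block_diag :: "nat \<Rightarrow> nat \<Rightarrow> ((nat \<Rightarrow> int) \<Rightarrow> (nat \<Rightarrow> int)) \<Rightarrow> (nat \<Rightarrow> int) \<Rightarrow> nat \<Rightarrow> int"
  where "block_diag k b C x = (\<lambda>i. if i < k then C (block b x (i div b)) (i mod b) else 0)"

lemma block_Zk: "block b x q \<in> Zk b"
  by (simp add: block_def Zk_def)

lemma additive_block: "additive (\<lambda>x. block b x q)"
  by (simp add: additive_def block_def fun_eq_iff)

lemma block_block_diag:
  assumes C: "\<And>u. C u \<in> Zk b" and q: "b * Suc q \<le> k"
  shows "block b (block_diag k b C x) q = C (block b x q)"
proof
  fix t
  show "block b (block_diag k b C x) q t = C (block b x q) t"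
    using C[of "block b x q"] q by (auto simp: block_def block_diag_def Zk_def)
qed

lemma Zk_eq_blockI:
  assumes "b dvd k" and x: "x \<in> Zk k" and y: "y \<in> Zk k"
    and blocks: "\<And>q. b * Suc q \<le> k \<Longrightarrow> block b x q = block b y q"
  shows "x = y"
proof
  fix i
  show "x i = y i"
  proof (cases "i < k")
    case True
    obtain s where k: "k = b * s"
      using assms(1) by blast
    have b: "0 < b"
      using True k by (cases b) auto
    have "i div b < s"
      using True k by (simp add: less_mult_imp_div_less mult.commute)
    then have "b * Suc (i div b) \<le> k"
      using k by (metis Suc_leI mult_le_mono2)
    then have "block b x (i div b) (i mod b) = block b y (i div b) (i mod b)"
      using blocks by simp
    then show ?thesis
      using b by (simp add: block_def)
  qed (use x y in \<open>simp add: Zk_def\<close>)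
qed

lemma cyclotomic_map_block_diag:
  assumes C: "cyclotomic_map C b n" and "b dvd k"
  shows "cyclotomic_map (block_diag k b C) k n"
proof -
  interpret C: cyclotomic_map C b n by (fact C)
  let ?B = "block_diag k b C"
  have blocks: "block b ((?B ^^ j) x) q = (C ^^ j) (block b x q)" if "b * Suc q \<le> k" for j x q
    by (induction j) (simp_all add: block_block_diag[OF C.maps_Zk that])
  have B_Zk: "?B x \<in> Zk k" for x
    by (simp add: block_diag_def Zk_def)
  have B_funpow_Zk: "(?B ^^ j) x \<in> Zk k" if "x \<in> Zk k" for j x
    using that B_Zk by (cases j) simp_all
  show ?thesis
  proof
    show "?B (x + y) = ?B x + ?B y" for x y
      by (simp add: block_diag_def fun_eq_iff additive.add[OF additive_block] C.add)
    show "?B x \<in> Zk k" for x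
      by (fact B_Zk)
    show "(?B ^^ n) x = x" if x: "x \<in> Zk k" for x
      by (rule Zk_eq_blockI[OF assms(2) B_funpow_Zk[OF x] x])
        (simp add: blocks block_Zk C.funpow_order)
    show "(\<Sum>j<n. (?B ^^ j) x) = 0" if x: "x \<in> Zk k" for x
      by (rule Zk_eq_blockI[OF assms(2) Zk_sum[OF B_funpow_Zk[OF x]] Zk_zero])
        (simp add: additive.sum[OF additive_block] additive.zero[OF additive_block]
          blocks block_Zk C.sum_funpow)
  qed (fact C.order_pos)
qed

text \<open>Multiplication by t on Z[t]/(1 + t + ... + t^b), in the basis 1, t, ..., t^(b-1).\<close>
definition companion :: "nat \<Rightarrow> (nat \<Rightarrow> int) \<Rightarrow> nat \<Rightarrow> int" where
  "companion b u = (\<lambda>j. if j < b then (if j = 0 then 0 else u (j - 1)) - u (b - 1) else 0)"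

lemma cyclotomic_map_companion:
  assumes "b \<in> {1, 2, 4}"
  shows "cyclotomic_map (companion b) b (Suc b)"
proof
  show "companion b (x + y) = companion b x + companion b y" for x y
    by (simp add: companion_def fun_eq_iff)
  show "companion b x \<in> Zk b" for x
    by (simp add: companion_def Zk_def)
  show "(companion b ^^ Suc b) x = x" if "x \<in> Zk b" for x
  proof
    fix j
    show "(companion b ^^ Suc b) x j = x j"
      using assms that
      by (cases "j < b") (auto simp: companion_def Zk_def numeral_eq_Suc less_Suc_eq)
  qed
  show "(\<Sum>j<Suc b. (companion b ^^ j) x) = 0" if "x \<in> Zk b" for x
  proof
    fix j
    show "(\<Sum>j<Suc b. (companion b ^^ j) x) j = 0 j"
      using assms that
      by (cases "j < b") (auto simp: companion_def Zk_def fun_sum_apply numeral_eq_Suc less_Suc_eq)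
  qed
qed simp

section \<open>An automorphism of G wr Z^k with finitely many Reidemeister classes\<close>

lemma (in group) wreath_transport_closed:
  assumes a: "(\<sigma>, x) \<in> carrier (wreath_Zk G k)" and x': "x' \<in> Zk k"
    and F: "F \<one> = \<one>" "\<And>g. g \<in> carrier G \<Longrightarrow> F g \<in> carrier G"
    and N: "\<And>z. z \<in> Zk k \<Longrightarrow> N z \<in> Zk k" "inj_on N (Zk k)"
  shows "(\<lambda>z. if z \<in> Zk k then F (\<sigma> (N z)) else \<one>, x') \<in> carrier (wreath_Zk G k)"
proof -
  have "{z. (if z \<in> Zk k then F (\<sigma> (N z)) else \<one>) \<noteq> \<one>} \<subseteq> N -` {z. \<sigma> z \<noteq> \<one>} \<inter> Zk k"
    using F by auto
  moreover have "finite (N -` {z. \<sigma> z \<noteq> \<one>} \<inter> Zk k)"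
    using a N by (intro finite_vimage_IntI) (simp_all add: wreath_carrier)
  ultimately have "finite {z. (if z \<in> Zk k then F (\<sigma> (N z)) else \<one>) \<noteq> \<one>}"
    by (rule finite_subset)
  then show ?thesis
    using a x' F N by (simp add: wreath_carrier)
qed

locale fpf_wreath = comm_group G + cyclotomic_map M k n
  for G (structure) and M k n +
  fixes A :: "'a \<Rightarrow> 'a"
  assumes finite_carrier: "finite (carrier G)"
    and A_iso: "A \<in> iso G G"
    and A_funpow_fpf: "g \<in> carrier G \<Longrightarrow> (A ^^ n) g = g \<Longrightarrow> g = \<one>"
begin

abbreviation W where "W \<equiv> wreath_Zk G k"

lemma W_group: "group W"
  by (rule group_wreath_Zk)

sublocale A: group_hom G G A
  using A_iso by (simp add: group_hom_def group_hom_axioms_def iso_def is_group)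

lemma group_hom_A_funpow: "group_hom G G (A ^^ m)"
proof -
  have "A ^^ m \<in> hom G G"
    by (induction m) (auto simp: hom_def Pi_def A.hom_mult)
  then show ?thesis
    by (simp add: group_hom_def group_hom_axioms_def is_group)
qed

definition A_inv :: "'a \<Rightarrow> 'a" where
  "A_inv = inv_into (carrier G) A"

lemma A_bij: "bij_betw A (carrier G) (carrier G)"
  using A_iso by (simp add: iso_def)

lemma A_inv_closed: "g \<in> carrier G \<Longrightarrow> A_inv g \<in> carrier G"
  unfolding A_inv_def using A_bij by (metis bij_betw_def inv_into_into)

lemma A_A_inv: "g \<in> carrier G \<Longrightarrow> A (A_inv g) = g"
  unfolding A_inv_def using A_bij by (meson bij_betw_inv_into_right)

lemma A_inv_A: "g \<in> carrier G \<Longrightarrow> A_inv (A g) = g"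
  unfolding A_inv_def using A_bij by (meson bij_betw_inv_into_left)

lemma A_inv_one: "A_inv \<one> = \<one>"
  using A_inv_A[of \<one>] by simp

definition twist :: "((nat \<Rightarrow> int) \<Rightarrow> 'a) \<times> (nat \<Rightarrow> int) \<Rightarrow> ((nat \<Rightarrow> int) \<Rightarrow> 'a) \<times> (nat \<Rightarrow> int)"
  where "twist = (\<lambda>(\<sigma>, x). (\<lambda>z. if z \<in> Zk k then A (\<sigma> (M_inv z)) else \<one>, M x))"

definition untwist :: "((nat \<Rightarrow> int) \<Rightarrow> 'a) \<times> (nat \<Rightarrow> int) \<Rightarrow> ((nat \<Rightarrow> int) \<Rightarrow> 'a) \<times> (nat \<Rightarrow> int)"
  where "untwist = (\<lambda>(\<sigma>, x). (\<lambda>z. if z \<in> Zk k then A_inv (\<sigma> (M z)) else \<one>, M_inv x))"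

lemma twist_closed:
  assumes "w \<in> carrier W"
  shows "twist w \<in> carrier W"
proof -
  obtain \<sigma> x where w: "w = (\<sigma>, x)"
    by fastforce
  show ?thesis
    using assms wreath_transport_closed[of \<sigma> x k "M x" A M_inv] maps_Zk M_inv_Zk inj_on_M_inv_Zk
    by (simp add: w twist_def)
qed

lemma untwist_closed:
  assumes "w \<in> carrier W"
  shows "untwist w \<in> carrier W"
proof -
  obtain \<sigma> x where w: "w = (\<sigma>, x)"
    by fastforce
  have "M_inv x \<in> Zk k"
    using assms by (simp add: w wreath_carrier M_inv_Zk)
  then show ?thesis
    using assms wreath_transport_closed[of \<sigma> x k "M_inv x" A_inv M] maps_Zk inj_on_Zk
      A_inv_one A_inv_closed
    by (simp add: w untwist_def)
qed

lemma twist_untwist: "w \<in> carrier W \<Longrightarrow> twist (untwist w) = w"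
  by (cases w) (auto simp: twist_def untwist_def wreath_carrier M_inv_Zk M_M_inv A_A_inv fun_eq_iff)

lemma untwist_twist: "w \<in> carrier W \<Longrightarrow> untwist (twist w) = w"
  by (cases w) (auto simp: twist_def untwist_def wreath_carrier maps_Zk M_inv_M A_inv_A fun_eq_iff)

lemma twist_hom: "twist \<in> hom W W"
proof (rule homI)
  fix a b
  assume a: "a \<in> carrier W" and b: "b \<in> carrier W"
  obtain \<sigma> x \<tau> y where ab: "a = (\<sigma>, x)" "b = (\<tau>, y)"
    by (metis surj_pair)
  have x: "x \<in> Zk k"
    using a by (simp add: ab wreath_carrier)
  have "(if z \<in> Zk k then A (\<sigma> (M_inv z) \<otimes> \<tau> (M_inv z - x)) else \<one>)
      = (if z \<in> Zk k then A (\<sigma> (M_inv z)) else \<one>)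
        \<otimes> (if z - M x \<in> Zk k then A (\<tau> (M_inv (z - M x))) else \<one>)" for z
    using x a b wreath_carrier_val[of \<sigma> x] wreath_carrier_val[of \<tau> y]
    by (auto simp: ab Zk_diff_iff maps_Zk M_inv_diff)
  then show "twist (a \<otimes>\<^bsub>W\<^esub> b) = twist a \<otimes>\<^bsub>W\<^esub> twist b"
    by (simp add: ab twist_def wreath_mult add)
qed (fact twist_closed)

lemma twist_iso: "twist \<in> iso W W"
  unfolding iso_def
  using twist_hom twist_closed untwist_closed twist_untwist untwist_twist
  by (auto intro!: bij_betw_byWitness[where f' = untwist])

lemma inv_translation: "y \<in> Zk k \<Longrightarrow> inv\<^bsub>W\<^esub> (\<lambda>z. \<one>, y) = (\<lambda>z. \<one>, - y)"
  by (rule group.inv_equality[OF W_group]) (auto simp: wreath_mult wreath_one wreath_carrier)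

lemma inv_coefficient:
  assumes t: "(\<tau>, 0) \<in> carrier W"
  shows "inv\<^bsub>W\<^esub> (\<tau>, 0) = (\<lambda>z. inv (\<tau> z), 0)"
  using wreath_inverse[OF t] t W_group group.inv_equality by fastforce

lemma twist_translation: "twist (\<lambda>z. \<one>, y) = (\<lambda>z. \<one>, M y)"
  by (simp add: twist_def fun_eq_iff)

lemma twisted_conj_translate:
  assumes w: "(\<sigma>, x) \<in> carrier W" and y: "y \<in> Zk k"
  shows "((\<sigma>, x), (\<lambda>z. \<sigma> (z - y), x + y - M y)) \<in> twisted_conj W twist"
proof -
  have g: "(\<lambda>z. \<one>, y) \<in> carrier W"
    using y by (simp add: wreath_carrier)
  have "(\<lambda>z. \<one>, y) \<otimes>\<^bsub>W\<^esub> (\<sigma>, x) \<otimes>\<^bsub>W\<^esub> twist (inv\<^bsub>W\<^esub> (\<lambda>z. \<one>, y))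
      = (\<lambda>z. \<sigma> (z - y), x + y - M y)"
    using wreath_carrier_val[OF w] y by (simp add: inv_translation twist_translation wreath_mult minus)
  moreover have "(\<lambda>z. \<one>, y) \<otimes>\<^bsub>W\<^esub> (\<sigma>, x) \<otimes>\<^bsub>W\<^esub> twist (inv\<^bsub>W\<^esub> (\<lambda>z. \<one>, y)) \<in> carrier W"
    using g w twist_closed group.inv_closed[OF W_group] group.subgroup_self[OF W_group]
    by (simp add: subgroup.m_closed)
  ultimately show ?thesis
    using w g unfolding twisted_conj_def by (auto intro!: bexI[of _ "(\<lambda>z. \<one>, y)"])
qed

definition lang :: "'a \<Rightarrow> 'a" where
  "lang g = g \<otimes> inv ((A ^^ n) g)"

lemma lang_hom: "lang \<in> hom G G"
proof (rule homI)
  interpret An: group_hom G G "A ^^ n"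
    by (rule group_hom_A_funpow)
  show "lang g \<in> carrier G" if "g \<in> carrier G" for g
    using that by (simp add: lang_def)
  show "lang (g \<otimes> h) = lang g \<otimes> lang h" if "g \<in> carrier G" "h \<in> carrier G" for g h
  proof -
    have "lang (g \<otimes> h) = (g \<otimes> h) \<otimes> (inv ((A ^^ n) g) \<otimes> inv ((A ^^ n) h))"
      using that by (simp add: lang_def inv_mult)
    also have "\<dots> = lang g \<otimes> lang h"
      using that by (simp add: lang_def m_ac)
    finally show ?thesis .
  qed
qed

lemma lang_bij: "bij_betw lang (carrier G) (carrier G)"
proof -
  have "g = \<one>" if "g \<in> carrier G" "lang g = \<one>" for g
  proof -
    have "(A ^^ n) g = g"
      using that group_hom.hom_closed[OF group_hom_A_funpow]
      by (metis inv_closed inv_equality inv_inv lang_def)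
    then show ?thesis
      using A_funpow_fpf that(1) by blast
  qed
  then have inj: "inj_on lang (carrier G)"
    using lang_hom by (simp add: inj_on_one_iff' is_group)
  moreover have "lang ` carrier G = carrier G"
    using lang_hom inj by (intro endo_inj_surj[OF finite_carrier]) (auto simp: hom_def)
  ultimately show ?thesis
    by (simp add: bij_betw_def)
qed

fun orbit_prod :: "('c \<Rightarrow> 'a) \<Rightarrow> ('c \<Rightarrow> 'c) \<Rightarrow> nat \<Rightarrow> 'c \<Rightarrow> 'a" where
  "orbit_prod s T 0 z = \<one>"
| "orbit_prod s T (Suc m) z = s z \<otimes> A (orbit_prod s T m (T z))"

lemma orbit_prod_closed: "(\<And>z. s z \<in> carrier G) \<Longrightarrow> orbit_prod s T m z \<in> carrier G"
  by (induction m arbitrary: z) simp_all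

lemma orbit_prod_Suc_right:
  assumes s: "\<And>z. s z \<in> carrier G"
  shows "orbit_prod s T (Suc m) z = orbit_prod s T m z \<otimes> (A ^^ m) (s ((T ^^ m) z))"
proof (induction m arbitrary: z)
  case (Suc m)
  have closed: "orbit_prod s T m (T z) \<in> carrier G" "(A ^^ m) (s ((T ^^ m) (T z))) \<in> carrier G"
    using s orbit_prod_closed[of s, OF s] group_hom.hom_closed[OF group_hom_A_funpow] by auto
  have "orbit_prod s T (Suc (Suc m)) z
      = s z \<otimes> A (orbit_prod s T m (T z) \<otimes> (A ^^ m) (s ((T ^^ m) (T z))))"
    using Suc by simp
  also have "\<dots> = s z \<otimes> A (orbit_prod s T m (T z)) \<otimes> A ((A ^^ m) (s ((T ^^ m) (T z))))"
    using s closed by (simp add: A.hom_mult m_assoc)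
  also have "(T ^^ m) (T z) = (T ^^ Suc m) z"
    by (simp only: funpow_Suc_right comp_apply)
  finally show ?case
    by simp
qed (simp add: s A.hom_one)

lemma orbit_prod_eq_one:
  "(\<And>j. j < m \<Longrightarrow> s ((T ^^ j) z) = \<one>) \<Longrightarrow> orbit_prod s T m z = \<one>"
proof (induction m arbitrary: z)
  case (Suc m)
  have "s z = \<one>"
    using Suc.prems[of 0] by simp
  moreover have "orbit_prod s T m (T z) = \<one>"
  proof (rule Suc.IH)
    fix j
    assume "j < m"
    then show "s ((T ^^ j) (T z)) = \<one>"
      using Suc.prems[of "Suc j"] by (simp add: funpow_Suc_right del: funpow.simps)
  qed
  ultimately show ?case
    by (simp add: A.hom_one)
qed simp

lemma finite_support_orbit_prod:
  assumes "finite {z. s z \<noteq> \<one>}" and "\<And>j. inj_on (T ^^ j) Z"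
  shows "finite {z \<in> Z. orbit_prod s T m z \<noteq> \<one>}"
proof (rule finite_subset)
  show "{z \<in> Z. orbit_prod s T m z \<noteq> \<one>} \<subseteq> (\<Union>j<m. (T ^^ j) -` {z. s z \<noteq> \<one>} \<inter> Z)"
  proof
    fix z
    assume z: "z \<in> {z \<in> Z. orbit_prod s T m z \<noteq> \<one>}"
    then obtain j where "j < m" and "s ((T ^^ j) z) \<noteq> \<one>"
      using orbit_prod_eq_one[of m s T z] by auto
    with z show "z \<in> (\<Union>j<m. (T ^^ j) -` {z. s z \<noteq> \<one>} \<inter> Z)"
      by auto
  qed
  show "finite (\<Union>j<m. (T ^^ j) -` {z. s z \<noteq> \<one>} \<inter> Z)"
    by (intro finite_UN_I finite_vimage_IntI assms) simp
qed

text \<open>Expanding orbit_prod s T (Suc n) z from both ends, using T^n z = z.\<close>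
lemma lang_orbit_prod:
  assumes s: "\<And>z. s z \<in> carrier G" and z: "(T ^^ n) z = z"
  shows "inv (orbit_prod s T n z) \<otimes> lang (s z) \<otimes> A (orbit_prod s T n (T z)) = \<one>"
proof -
  define a where "a = orbit_prod s T n z"
  define c where "c = (A ^^ n) (s z)"
  define e where "e = A (orbit_prod s T n (T z))"
  have closed: "a \<in> carrier G" "c \<in> carrier G" "e \<in> carrier G" "s z \<in> carrier G"
    using s orbit_prod_closed[of s, OF s] group_hom.hom_closed[OF group_hom_A_funpow]
    by (simp_all add: a_def c_def e_def)
  have eq: "s z \<otimes> e = a \<otimes> c"
    using orbit_prod_Suc_right[OF s, where T = T and m = n and z = z] z
    by (simp add: a_def c_def e_def)
  have "inv a \<otimes> (s z \<otimes> inv c) \<otimes> e = (inv a \<otimes> inv c) \<otimes> (s z \<otimes> e)"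
    using closed by (simp add: m_ac)
  also have "\<dots> = (inv a \<otimes> inv c) \<otimes> (a \<otimes> c)"
    by (simp only: eq)
  also have "\<dots> = \<one>"
    using closed by (simp add: inv_mult[symmetric])
  finally show ?thesis
    unfolding a_def c_def e_def lang_def .
qed

lemma untwisting_coefficient:
  assumes w: "(\<sigma>, c) \<in> carrier W"
  obtains \<tau> where "(\<tau>, 0) \<in> carrier W"
    and "\<And>z. z \<in> Zk k \<Longrightarrow> \<tau> z \<otimes> \<sigma> z \<otimes> A (inv (\<tau> (M_inv (z - c)))) = \<one>"
    and "\<And>z. z \<notin> Zk k \<Longrightarrow> \<tau> z = \<one>"
proof
  define T where "T = (\<lambda>z. M_inv (z - c))"
  define s where "s = (\<lambda>z. inv_into (carrier G) lang (\<sigma> z))"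
  define \<tau> where "\<tau> = (\<lambda>z. if z \<in> Zk k then inv (orbit_prod s T n z) else \<one>)"
  have c: "c \<in> Zk k"
    using w by (simp add: wreath_carrier)
  have \<sigma>: "\<sigma> z \<in> carrier G" for z
    using w by (rule wreath_carrier_val)
  have s: "s z \<in> carrier G" and lang_s: "lang (s z) = \<sigma> z" for z
    using lang_bij \<sigma> by (simp_all add: s_def bij_betw_def inv_into_into f_inv_into_f)
  have T: "bij_betw (T ^^ j) (Zk k) (Zk k)" for j
    unfolding T_def by (intro bij_betw_funpow bij_betw_affine_inverse c)
  have "s z = \<one>" if "\<sigma> z = \<one>" for z
    using lang_bij lang_hom s[of z] lang_s[of z] that
    by (metis bij_betw_def hom_one inj_on_def is_group one_closed group_hom.intro
        group_hom_axioms.intro group_hom.hom_one)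
  then have "finite {z. s z \<noteq> \<one>}"
    using w by (auto simp: wreath_carrier elim: finite_subset[rotated])
  then have "finite {z \<in> Zk k. orbit_prod s T n z \<noteq> \<one>}"
    using T bij_betw_imp_inj_on by (intro finite_support_orbit_prod) blast+
  moreover have "{z. \<tau> z \<noteq> \<one>} = {z \<in> Zk k. orbit_prod s T n z \<noteq> \<one>}"
    using orbit_prod_closed[of s, OF s] by (auto simp: \<tau>_def inv_eq_1_iff)
  ultimately show "(\<tau>, 0) \<in> carrier W"
    using orbit_prod_closed[of s, OF s] by (simp add: wreath_carrier \<tau>_def)
  show "\<tau> z \<otimes> \<sigma> z \<otimes> A (inv (\<tau> (M_inv (z - c)))) = \<one>" if z: "z \<in> Zk k" for z
  proof -
    have "M_inv (z - c) = T z" and "T z \<in> Zk k" and "(T ^^ n) z = z"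
      using z c by (simp_all add: T_def affine_inverse_funpow_order M_inv_Zk Zk_diff)
    then show ?thesis
      using z lang_orbit_prod[of s T z] s orbit_prod_closed[of s, OF s]
      by (simp add: \<tau>_def lang_s)
  qed
  show "\<tau> z = \<one>" if "z \<notin> Zk k" for z
    using that by (simp add: \<tau>_def)
qed

lemma twisted_conj_one_coefficient:
  assumes w: "(\<sigma>, c) \<in> carrier W"
  shows "((\<sigma>, c), (\<lambda>z. \<one>, c)) \<in> twisted_conj W twist"
proof -
  obtain \<tau> where \<tau>: "(\<tau>, 0) \<in> carrier W"
    and cancel: "\<And>z. z \<in> Zk k \<Longrightarrow> \<tau> z \<otimes> \<sigma> z \<otimes> A (inv (\<tau> (M_inv (z - c)))) = \<one>"
    and outside: "\<And>z. z \<notin> Zk k \<Longrightarrow> \<tau> z = \<one>"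
    using untwisting_coefficient[OF w] by blast
  have c: "c \<in> Zk k"
    using w by (simp add: wreath_carrier)
  have "\<tau> z \<otimes> \<sigma> z \<otimes> (if z - c \<in> Zk k then A (inv (\<tau> (M_inv (z - c)))) else \<one>) = \<one>" for z
    using cancel[of z] outside[of z] w c by (cases "z \<in> Zk k") (auto simp: Zk_diff_iff wreath_carrier)
  then have "(\<tau>, 0) \<otimes>\<^bsub>W\<^esub> (\<sigma>, c) \<otimes>\<^bsub>W\<^esub> twist (inv\<^bsub>W\<^esub> (\<tau>, 0)) = (\<lambda>z. \<one>, c)"
    using \<tau> by (simp add: inv_coefficient twist_def wreath_mult zero)
  moreover have "(\<lambda>z. \<one>, c) \<in> carrier W"
    using c by (simp add: wreath_carrier)
  ultimately show ?thesis
    using w \<tau> unfolding twisted_conj_def by (auto intro!: bexI[of _ "(\<tau>, 0)"])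
qed

lemma reidemeister_number_twist: "reidemeister_number W twist < \<infinity>"
proof (rule reidemeister_number_finiteI[OF W_group twist_hom])
  show "finite ((\<lambda>r. (\<lambda>z. \<one>, r)) ` Zk_residues k n)"
    by (simp add: finite_Zk_residues)
  fix w
  assume w: "w \<in> carrier W"
  obtain \<sigma> x where wx: "w = (\<sigma>, x)"
    by fastforce
  have "x \<in> Zk k"
    using w by (simp add: wx wreath_carrier)
  then obtain y where y: "y \<in> Zk k" and r: "x + y - M y \<in> Zk_residues k n"
    using residue_representative by blast
  have translate: "(w, (\<lambda>z. \<sigma> (z - y), x + y - M y)) \<in> twisted_conj W twist"
    using twisted_conj_translate w y by (simp add: wx)
  then have "((\<lambda>z. \<sigma> (z - y), x + y - M y), (\<lambda>z. \<one>, x + y - M y)) \<in> twisted_conj W twist"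
    by (intro twisted_conj_one_coefficient) (simp add: twisted_conj_def)
  with translate have "(w, (\<lambda>z. \<one>, x + y - M y)) \<in> twisted_conj W twist"
    using equiv_twisted_conj[OF W_group twist_hom] by (meson equivE transD)
  then show "\<exists>s\<in>(\<lambda>r. (\<lambda>z. \<one>, r)) ` Zk_residues k n. (w, s) \<in> twisted_conj W twist"
    using r by blast
qed

end

theorem wreath_Zk_finite_reidemeister:
  assumes "comm_group G" and "finite (carrier G)" and "A \<in> iso G G"
    and "\<And>g. g \<in> carrier G \<Longrightarrow> (A ^^ n) g = g \<Longrightarrow> g = \<one>\<^bsub>G\<^esub>"
    and "cyclotomic_map M k n"
  shows "\<exists>\<phi>. \<phi> \<in> iso (wreath_Zk G k) (wreath_Zk G k) \<and> reidemeister_number (wreath_Zk G k) \<phi> < \<infinity>"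
proof -
  interpret fpf_wreath G M k n A
    using assms by (simp add: fpf_wreath_def fpf_wreath_axioms_def)
  show ?thesis
    using twist_iso reidemeister_number_twist by blast
qed

section \<open>Fixed-point-free automorphisms of finite abelian groups\<close>

definition pp_modulus :: "(nat \<times> nat \<times> nat) list \<Rightarrow> nat \<Rightarrow> int" where
  "pp_modulus ds i = int (fst (ds ! i) ^ fst (snd (ds ! i)))"

definition pp_rank :: "(nat \<times> nat \<times> nat) list \<Rightarrow> nat \<Rightarrow> nat" where
  "pp_rank ds i = snd (snd (ds ! i))"

definition pp_index :: "(nat \<times> nat \<times> nat) list \<Rightarrow> (nat \<times> nat) set" where
  "pp_index ds = {(i, j). i < length ds \<and> j < pp_rank ds i}"

lemma finite_pp_index: "finite (pp_index ds)"
proof -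
  have "pp_index ds = (SIGMA i:{..<length ds}. {..<pp_rank ds i})"
    by (auto simp: pp_index_def)
  then show ?thesis
    by simp
qed

lemma pp_carrier:
  assumes "\<And>i. i < length ds \<Longrightarrow> 0 < pp_modulus ds i"
  shows "carrier (prime_power_group ds) = (\<Pi>\<^sub>E (i, j)\<in>pp_index ds. {0..<pp_modulus ds i})"
proof -
  have "carrier (integer_mod_group (fst (ds ! i) ^ fst (snd (ds ! i)))) = {0..<pp_modulus ds i}"
    if "(i, j) \<in> pp_index ds" for i j
    using assms[of i] that by (auto simp: carrier_integer_mod_group pp_modulus_def pp_index_def)
  then show ?thesis
    unfolding prime_power_group_def pp_index_def[symmetric]
    by (auto simp: pp_rank_def pp_index_def intro!: PiE_cong)
qed

lemma pp_mult:
  "f \<otimes>\<^bsub>prime_power_group ds\<^esub> g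
     = restrict (\<lambda>(i, j). (f (i, j) + g (i, j)) mod pp_modulus ds i) (pp_index ds)"
  by (auto simp: prime_power_group_def pp_index_def pp_rank_def pp_modulus_def restrict_def fun_eq_iff)

lemma pp_one: "\<one>\<^bsub>prime_power_group ds\<^esub> = restrict (\<lambda>p. 0) (pp_index ds)"
  by (auto simp: prime_power_group_def pp_index_def pp_rank_def restrict_def fun_eq_iff)

lemma group_pp: "group (prime_power_group ds)"
  unfolding prime_power_group_def by (rule product_group) auto

text \<open>L is an integer matrix acting on the coordinates below d which, reduced mod m, is an
  automorphism of (Z/m)^d whose n-th power fixes only 0.\<close>
locale fpf_mod_map = additive L for L :: "(nat \<Rightarrow> int) \<Rightarrow> (nat \<Rightarrow> int)" +
  fixes m :: int and d n :: nat
  assumes preserves_dvd: "(\<And>j. j < d \<Longrightarrow> m dvd u j) \<Longrightarrow> j < d \<Longrightarrow> m dvd L u j"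
    and reflects_dvd: "(\<And>j. j < d \<Longrightarrow> m dvd L u j) \<Longrightarrow> j < d \<Longrightarrow> m dvd u j"
    and funpow_fpf: "(\<And>j. j < d \<Longrightarrow> m dvd (L ^^ n) u j - u j) \<Longrightarrow> j < d \<Longrightarrow> m dvd u j"
begin

lemma cong_apply:
  assumes "\<And>j. j < d \<Longrightarrow> m dvd u j - v j" and "j < d"
  shows "m dvd L u j - L v j"
  using preserves_dvd[of "u - v"] assms by (simp add: diff)

end

locale fpf_pp_aut =
  fixes ds :: "(nat \<times> nat \<times> nat) list" and L :: "nat \<Rightarrow> (nat \<Rightarrow> int) \<Rightarrow> (nat \<Rightarrow> int)"
    and n :: nat
  assumes modulus_pos: "i < length ds \<Longrightarrow> 0 < pp_modulus ds i"
    and fpf_mod_map: "i < length ds \<Longrightarrow> fpf_mod_map (L i) (pp_modulus ds i) (pp_rank ds i) n"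
    and order_pos: "0 < n"
begin

abbreviation P where "P \<equiv> prime_power_group ds"

definition aut :: "(nat \<times> nat \<Rightarrow> int) \<Rightarrow> (nat \<times> nat \<Rightarrow> int)" where
  "aut f = restrict (\<lambda>(i, j). L i (\<lambda>j'. f (i, j')) j mod pp_modulus ds i) (pp_index ds)"

lemma carrier_P: "carrier P = (\<Pi>\<^sub>E (i, j)\<in>pp_index ds. {0..<pp_modulus ds i})"
  using modulus_pos by (rule pp_carrier)

lemma aut_closed: "aut f \<in> carrier P"
  using modulus_pos by (auto simp: carrier_P aut_def pp_index_def)

lemma eq_one_if_dvd:
  assumes f: "f \<in> carrier P"
    and dvd: "\<And>i j. (i, j) \<in> pp_index ds \<Longrightarrow> pp_modulus ds i dvd f (i, j)"
  shows "f = \<one>\<^bsub>P\<^esub>"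
proof (rule extensionalityI[of _ "pp_index ds"])
  show "f \<in> extensional (pp_index ds)" "\<one>\<^bsub>P\<^esub> \<in> extensional (pp_index ds)"
    using f by (simp_all add: carrier_P pp_one PiE_iff)
  fix p
  assume p: "p \<in> pp_index ds"
  then obtain i j where ij: "p = (i, j)"
    by fastforce
  have "0 \<le> f (i, j)" and "f (i, j) < pp_modulus ds i"
    using f p by (auto simp: carrier_P ij PiE_iff)
  moreover have "pp_modulus ds i dvd f (i, j)"
    using dvd p by (simp add: ij)
  ultimately have "f (i, j) = 0"
    using zdvd_not_zless[of "f (i, j)" "pp_modulus ds i"] by (cases "f (i, j) = 0") auto
  then show "f p = \<one>\<^bsub>P\<^esub> p"
    using p by (simp add: ij pp_one)
qed

lemma aut_funpow_cong:
  assumes ij: "(i, j) \<in> pp_index ds" and t: "0 < t"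
  shows "pp_modulus ds i dvd (aut ^^ t) f (i, j) - (L i ^^ t) (\<lambda>j'. f (i, j')) j"
  using ij t
proof (induction t arbitrary: j)
  case (Suc t)
  then have i: "i < length ds" and j: "j < pp_rank ds i"
    by (auto simp: pp_index_def)
  interpret fpf_mod_map "L i" "pp_modulus ds i" "pp_rank ds i" n
    using i by (rule fpf_mod_map)
  have IH: "pp_modulus ds i dvd (aut ^^ t) f (i, j') - (L i ^^ t) (\<lambda>j'. f (i, j')) j'"
    if "j' < pp_rank ds i" for j'
    using Suc.IH[of j'] i that by (cases "t = 0") (auto simp: pp_index_def)
  have "(aut ^^ Suc t) f (i, j) = L i (\<lambda>j'. (aut ^^ t) f (i, j')) j mod pp_modulus ds i"
    using Suc.prems by (simp add: aut_def)
  then show ?case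
    using cong_apply[OF IH j] by (simp add: mod_eq_dvd_iff[symmetric] mod_diff_left_eq)
qed simp

lemma aut_hom: "aut \<in> hom P P"
proof (rule homI)
  fix f g
  show "aut (f \<otimes>\<^bsub>P\<^esub> g) = aut f \<otimes>\<^bsub>P\<^esub> aut g"
  proof
    fix p
    show "aut (f \<otimes>\<^bsub>P\<^esub> g) p = (aut f \<otimes>\<^bsub>P\<^esub> aut g) p"
    proof (cases "p \<in> pp_index ds")
      case True
      then obtain i j where p: "p = (i, j)" and i: "i < length ds" and j: "j < pp_rank ds i"
        by (auto simp: pp_index_def)
      interpret fpf_mod_map "L i" "pp_modulus ds i" "pp_rank ds i" n
        using i by (rule fpf_mod_map)
      have "pp_modulus ds i dvd L i (\<lambda>j'. (f \<otimes>\<^bsub>P\<^esub> g) (i, j')) j - L i (\<lambda>j'. f (i, j') + g (i, j')) j"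
        by (rule cong_apply[OF _ j]) (use i in \<open>simp add: pp_mult pp_index_def mod_eq_dvd_iff[symmetric]\<close>)
      moreover have "L i (\<lambda>j'. f (i, j') + g (i, j')) = L i (\<lambda>j'. f (i, j')) + L i (\<lambda>j'. g (i, j'))"
        using add[of "\<lambda>j'. f (i, j')" "\<lambda>j'. g (i, j')"] by (simp only: plus_fun_def)
      ultimately show ?thesis
        using True by (simp add: p aut_def pp_mult mod_eq_dvd_iff mod_add_eq)
    qed (simp add: aut_def pp_mult)
  qed
qed (rule aut_closed)

lemma aut_iso: "aut \<in> iso P P"
proof -
  have "f = \<one>\<^bsub>P\<^esub>" if f: "f \<in> carrier P" and "aut f = \<one>\<^bsub>P\<^esub>" for f
  proof (rule eq_one_if_dvd[OF f])
    fix i j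
    assume ij: "(i, j) \<in> pp_index ds"
    then have i: "i < length ds" and j: "j < pp_rank ds i"
      by (auto simp: pp_index_def)
    interpret fpf_mod_map "L i" "pp_modulus ds i" "pp_rank ds i" n
      using i by (rule fpf_mod_map)
    have "pp_modulus ds i dvd L i (\<lambda>j'. f (i, j')) j'" if "j' < pp_rank ds i" for j'
    proof -
      have "aut f (i, j') = \<one>\<^bsub>P\<^esub> (i, j')"
        using \<open>aut f = \<one>\<^bsub>P\<^esub>\<close> by simp
      then show ?thesis
        using i that by (simp add: aut_def pp_one pp_index_def dvd_eq_mod_eq_0)
    qed
    then show "pp_modulus ds i dvd f (i, j)"
      using reflects_dvd[where u = "\<lambda>j'. f (i, j')"] j by blast
  qed
  then have inj: "inj_on aut (carrier P)"
    using aut_hom group_pp by (simp add: inj_on_one_iff')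
  have "finite (carrier P)"
    by (auto simp: carrier_P intro!: finite_PiE finite_pp_index)
  then have "aut ` carrier P = carrier P"
    using inj aut_closed by (intro endo_inj_surj) auto
  then show ?thesis
    using aut_hom inj by (simp add: iso_def bij_betw_def)
qed

lemma aut_funpow_fpf:
  assumes f: "f \<in> carrier P" and fixed: "(aut ^^ n) f = f"
  shows "f = \<one>\<^bsub>P\<^esub>"
proof (rule eq_one_if_dvd[OF f])
  fix i j
  assume ij: "(i, j) \<in> pp_index ds"
  then have i: "i < length ds" and j: "j < pp_rank ds i"
    by (auto simp: pp_index_def)
  interpret fpf_mod_map "L i" "pp_modulus ds i" "pp_rank ds i" n
    using i by (rule fpf_mod_map)
  have "pp_modulus ds i dvd (L i ^^ n) (\<lambda>j'. f (i, j')) j' - f (i, j')" if "j' < pp_rank ds i" for j'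
    using aut_funpow_cong[of i j' n f] i that order_pos fixed
    by (simp add: pp_index_def dvd_diff_commute)
  then show "pp_modulus ds i dvd f (i, j)"
    using funpow_fpf[where u = "\<lambda>j'. f (i, j')"] j by blast
qed

end

lemma fpf_aut_transfer:
  assumes G: "group G" and H: "group H" and h: "h \<in> iso G H"
    and B: "B \<in> iso H H" and fpf: "\<And>g. g \<in> carrier H \<Longrightarrow> (B ^^ n) g = g \<Longrightarrow> g = \<one>\<^bsub>H\<^esub>"
  shows "\<exists>A\<in>iso G G. \<forall>g\<in>carrier G. (A ^^ n) g = g \<longrightarrow> g = \<one>\<^bsub>G\<^esub>"
proof
  define h' where "h' = inv_into (carrier G) h"
  have h': "h' \<in> iso H G"
    unfolding h'_def by (rule group.iso_set_sym[OF G h])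
  have hb: "bij_betw h (carrier G) (carrier H)"
    using h by (simp add: iso_def)
  have h'h: "h' (h g) = g" if "g \<in> carrier G" for g
    unfolding h'_def using hb that by (meson bij_betw_inv_into_left)
  have hh': "h (h' y) = y" if "y \<in> carrier H" for y
    unfolding h'_def using hb that by (meson bij_betw_inv_into_right)
  have B_closed: "(B ^^ m) y \<in> carrier H" if "y \<in> carrier H" for y m
    using that B by (induction m) (auto simp: iso_def hom_def)
  have funpow: "((h' \<circ> B \<circ> h) ^^ m) g = h' ((B ^^ m) (h g))" if g: "g \<in> carrier G" for g m
  proof (induction m)
    case (Suc m)
    then show ?case
      using hh'[OF B_closed] hb g by (simp add: bij_betwE)
  qed (simp add: h'h g)
  show "h' \<circ> B \<circ> h \<in> iso G G"
    using iso_set_trans[OF iso_set_trans[OF h B] h'] by (simp add: comp_assoc)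
  show "\<forall>g\<in>carrier G. ((h' \<circ> B \<circ> h) ^^ n) g = g \<longrightarrow> g = \<one>\<^bsub>G\<^esub>"
  proof (intro ballI impI)
    fix g
    assume g: "g \<in> carrier G" and "((h' \<circ> B \<circ> h) ^^ n) g = g"
    then have "(B ^^ n) (h g) = h g"
      using funpow hh'[OF B_closed] hb by (metis bij_betwE)
    then have "h g = \<one>\<^bsub>H\<^esub>"
      using fpf hb g by (simp add: bij_betwE)
    then show "g = \<one>\<^bsub>G\<^esub>"
      using h g G H inj_on_one_iff'[of h G H] by (auto simp: iso_def bij_betw_def)
  qed
qed

lemma exists_fpf_aut:
  assumes G: "group G" and iso: "G \<cong> prime_power_group ds" and n: "0 < n"
    and ds: "\<And>p r d. (p, r, d) \<in> set ds \<Longrightarrow> 0 < p \<and> (\<exists>L. fpf_mod_map L (int (p ^ r)) d n)"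
  shows "\<exists>A\<in>iso G G. \<forall>g\<in>carrier G. (A ^^ n) g = g \<longrightarrow> g = \<one>\<^bsub>G\<^esub>"
proof -
  have "\<exists>L. 0 < pp_modulus ds i \<and> fpf_mod_map L (pp_modulus ds i) (pp_rank ds i) n"
    if i: "i < length ds" for i
  proof -
    obtain p r d where pr: "ds ! i = (p, r, d)"
      by (metis prod_cases3)
    then have "(p, r, d) \<in> set ds"
      using i by (metis nth_mem)
    then show ?thesis
      using ds[of p r d] pr by (simp add: pp_modulus_def pp_rank_def)
  qed
  then obtain L where L: "\<And>i. i < length ds
      \<Longrightarrow> 0 < pp_modulus ds i \<and> fpf_mod_map (L i) (pp_modulus ds i) (pp_rank ds i) n"
    by metis
  interpret fpf_pp_aut ds L n
    using L n by (simp add: fpf_pp_aut_def)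
  obtain h where "h \<in> iso G P"
    using iso by (auto simp: is_iso_def)
  then show ?thesis
    using fpf_aut_transfer[OF G group_pp _ aut_iso] aut_funpow_fpf by blast
qed

definition scalar_map :: "int \<Rightarrow> (nat \<Rightarrow> int) \<Rightarrow> nat \<Rightarrow> int" where
  "scalar_map c u = (\<lambda>j. c * u j)"

lemma fpf_mod_map_scalar:
  assumes "coprime m c" and "coprime m (c ^ n - 1)"
  shows "fpf_mod_map (scalar_map c) m d n"
proof
  have funpow: "(scalar_map c ^^ t) u j = c ^ t * u j" for t u j
    by (induction t arbitrary: j) (simp_all add: scalar_map_def)
  show "scalar_map c (x + y) = scalar_map c x + scalar_map c y" for x y
    by (simp add: scalar_map_def fun_eq_iff algebra_simps)
  show "m dvd scalar_map c u j" if "\<And>j. j < d \<Longrightarrow> m dvd u j" "j < d" for u j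
    using that by (simp add: scalar_map_def)
  show "m dvd u j" if "\<And>j. j < d \<Longrightarrow> m dvd scalar_map c u j" "j < d" for u j
    using that assms(1) by (simp add: scalar_map_def coprime_dvd_mult_right_iff)
  show "m dvd u j" if "\<And>j. j < d \<Longrightarrow> m dvd (scalar_map c ^^ n) u j - u j" "j < d" for u j
  proof -
    have "m dvd (c ^ n - 1) * u j"
      using that by (simp add: funpow algebra_simps)
    then show ?thesis
      using assms(2) by (simp add: coprime_dvd_mult_right_iff)
  qed
qed

definition fib_offset :: "nat \<Rightarrow> nat" where
  "fib_offset d = (if odd d then 3 else 0)"

text \<open>Block diagonal matrix on Z^d (d >= 2): Fibonacci blocks [[0,1],[1,1]] on consecutive
  pairs, preceded by one 3x3 block when d is odd.\<close>
definition fib_blocks :: "nat \<Rightarrow> (nat \<Rightarrow> int) \<Rightarrow> nat \<Rightarrow> int" where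
  "fib_blocks d u j =
     (if j < fib_offset d then (if j = 0 then u 2 else if j = 1 then u 0 + u 2 else u 1)
      else if even (j - fib_offset d) then u (j + 1) else u (j - 1) + u j)"

fun fib_step :: "int \<times> int \<Rightarrow> int \<times> int" where
  "fib_step (x, y) = (y, x + y)"

fun tri_step :: "int \<times> int \<times> int \<Rightarrow> int \<times> int \<times> int" where
  "tri_step (x, y, z) = (z, x + z, y)"

lemma fib_blocks_pair:
  assumes "fib_offset d \<le> a" and "even (a - fib_offset d)"
  shows "fib_blocks d u a = u (a + 1)" and "fib_blocks d u (a + 1) = u a + u (a + 1)"
  using assms by (simp_all add: fib_blocks_def)

lemma fib_blocks_triple:
  assumes "odd d"
  shows "fib_blocks d u 0 = u 2" and "fib_blocks d u 1 = u 0 + u 2" and "fib_blocks d u 2 = u 1"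
  using assms by (simp_all add: fib_blocks_def fib_offset_def)

lemma fib_blocks_funpow_pair:
  assumes "fib_offset d \<le> a" and "even (a - fib_offset d)"
  shows "((fib_blocks d ^^ t) u a, (fib_blocks d ^^ t) u (a + 1)) = (fib_step ^^ t) (u a, u (a + 1))"
proof (induction t)
  case (Suc t)
  have "(fib_step ^^ Suc t) (u a, u (a + 1))
      = fib_step ((fib_blocks d ^^ t) u a, (fib_blocks d ^^ t) u (a + 1))"
    by (simp only: funpow.simps comp_apply Suc)
  also have "\<dots> = ((fib_blocks d ^^ Suc t) u a, (fib_blocks d ^^ Suc t) u (a + 1))"
    by (simp only: funpow.simps comp_apply fib_blocks_pair[OF assms] fib_step.simps)
  finally show ?case
    by (rule sym)
qed simp

lemma fib_blocks_funpow_triple: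
  assumes "odd d"
  shows "((fib_blocks d ^^ t) u 0, (fib_blocks d ^^ t) u 1, (fib_blocks d ^^ t) u 2)
    = (tri_step ^^ t) (u 0, u 1, u 2)"
proof (induction t)
  case (Suc t)
  have "(tri_step ^^ Suc t) (u 0, u 1, u 2)
      = tri_step ((fib_blocks d ^^ t) u 0, (fib_blocks d ^^ t) u 1, (fib_blocks d ^^ t) u 2)"
    by (simp only: funpow.simps comp_apply Suc)
  also have "\<dots> = ((fib_blocks d ^^ Suc t) u 0, (fib_blocks d ^^ Suc t) u 1, (fib_blocks d ^^ Suc t) u 2)"
    by (simp only: funpow.simps comp_apply fib_blocks_triple[OF assms] tri_step.simps)
  finally show ?case
    by (rule sym)
qed simp

lemma fib_blocks_cases:
  assumes "j < d" and "2 \<le> d"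
  obtains (triple) "odd d" "j < 3" "3 \<le> d"
    | (pair) a where "fib_offset d \<le> a" "even (a - fib_offset d)" "a + 1 < d" "j = a \<or> j = a + 1"
proof (cases "j < fib_offset d")
  case True
  then have "odd d" "j < 3"
    by (auto simp: fib_offset_def split: if_splits)
  moreover have "3 \<le> d"
    using \<open>odd d\<close> assms(2) by presburger
  ultimately show ?thesis
    by (rule triple)
next
  case False
  define a where "a = fib_offset d + 2 * ((j - fib_offset d) div 2)"
  have "even (d - fib_offset d)"
    by (simp add: fib_offset_def)
  then have "fib_offset d \<le> a" "even (a - fib_offset d)" "a + 1 < d" "j = a \<or> j = a + 1"
    using False assms unfolding a_def by (auto simp: fib_offset_def) presburger+
  then show ?thesis
    by (rule pair)
qed

lemma fib_step_funpow_fpf: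
  assumes n: "n = 2 \<or> n = 5 \<and> coprime m 11"
    and "(fib_step ^^ n) (x, y) = (x', y')" and "m dvd x' - x" and "m dvd y' - y"
  shows "m dvd x \<and> m dvd y"
  using n
proof
  assume "n = 2"
  then have "x' = x + y" and "y' = x + 2 * y"
    using assms(2) by (auto simp: numeral_eq_Suc)
  then have "m dvd y" and "m dvd x + y"
    using assms(3,4) by (simp_all add: algebra_simps)
  then show ?thesis
    by (metis add_diff_cancel_right' dvd_diff)
next
  assume "n = 5 \<and> coprime m 11"
  then have "x' = 3 * x + 5 * y" and "y' = 5 * x + 8 * y" and "coprime m 11"
    using assms(2) by (auto simp: numeral_eq_Suc)
  then have "m dvd 2 * x + 5 * y" and "m dvd 5 * x + 7 * y" and "coprime m 11"
    using assms(3,4) by (simp_all add: algebra_simps)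
  moreover have "11 * x = 5 * (5 * x + 7 * y) - 7 * (2 * x + 5 * y)"
    and "11 * y = 5 * (2 * x + 5 * y) - 2 * (5 * x + 7 * y)"
    by simp_all
  ultimately have "m dvd 11 * x" and "m dvd 11 * y"
    by (metis dvd_diff dvd_mult)+
  then show ?thesis
    using \<open>coprime m 11\<close> by (simp add: coprime_dvd_mult_right_iff)
qed

lemma tri_step_funpow_fpf:
  assumes n: "n = 2 \<or> n = 5"
    and "(tri_step ^^ n) (x, y, z) = (x', y', z')"
    and "m dvd x' - x" and "m dvd y' - y" and "m dvd z' - z"
  shows "m dvd x \<and> m dvd y \<and> m dvd z"
  using n
proof
  assume "n = 2"
  then have "x' = y" and "y' = y + z" and "z' = x + z"
    using assms(2) by (auto simp: numeral_eq_Suc)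
  then have "m dvd y - x" and "m dvd z" and "m dvd x"
    using assms(3-5) by (simp_all add: algebra_simps)
  then show ?thesis
    by (metis diff_add_cancel dvd_add)
next
  assume "n = 5"
  then have "x' = x + y + z" and "y' = x + 2 * y + 2 * z" and "z' = x + y + 2 * z"
    using assms(2) by (auto simp: numeral_eq_Suc)
  then have "m dvd y + z" and "m dvd x + y + 2 * z" and "m dvd x + y + z"
    using assms(3-5) by (simp_all add: algebra_simps)
  moreover have "z = (x + y + 2 * z) - (x + y + z)" and "y = (y + z) - z"
    and "x = (x + y + z) - (y + z)"
    by simp_all
  ultimately show ?thesis
    by (metis dvd_diff)
qed

lemma fib_blocks_reflects_dvd:
  assumes d: "2 \<le> d" and u: "\<And>j. j < d \<Longrightarrow> m dvd fib_blocks d u j" and j: "j < d"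
  shows "m dvd u j"
  using j d
proof (cases rule: fib_blocks_cases)
  case triple
  then have "m dvd u 2" "m dvd u 0 + u 2" "m dvd u 1"
    using u[of 0] u[of 1] u[of 2] fib_blocks_triple[of d u] by auto
  then show ?thesis
    using triple by (auto simp: less_Suc_eq numeral_eq_Suc dest: dvd_diff[of _ _ "u 2"])
next
  case (pair a)
  then have "m dvd u (a + 1)" "m dvd u a + u (a + 1)"
    using u[of a] u[of "a + 1"] fib_blocks_pair[OF pair(1,2), of u] by auto
  then show ?thesis
    using pair(4) by (auto dest: dvd_diff[of _ _ "u (a + 1)"])
qed

lemma fib_blocks_funpow_fpf:
  assumes d: "2 \<le> d" and n: "n = 2 \<or> n = 5 \<and> coprime m 11"
    and u: "\<And>j. j < d \<Longrightarrow> m dvd (fib_blocks d ^^ n) u j - u j" and j: "j < d"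
  shows "m dvd u j"
  using j d
proof (cases rule: fib_blocks_cases)
  case triple
  have "m dvd u 0 \<and> m dvd u 1 \<and> m dvd u 2"
    using tri_step_funpow_fpf[OF _ fib_blocks_funpow_triple[OF triple(1), symmetric]]
      u[of 0] u[of 1] u[of 2] triple(3) n by auto
  then show ?thesis
    using triple by (auto simp: less_Suc_eq numeral_eq_Suc)
next
  case (pair a)
  have "m dvd u a \<and> m dvd u (a + 1)"
    using fib_step_funpow_fpf[OF n fib_blocks_funpow_pair[OF pair(1,2), symmetric]]
      u[of a] u[of "a + 1"] pair(3) by auto
  then show ?thesis
    using pair(4) by auto
qed

lemma fpf_mod_map_fib_blocks:
  assumes d: "2 \<le> d" and n: "n = 2 \<or> n = 5 \<and> coprime m 11"
  shows "fpf_mod_map (fib_blocks d) m d n"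
proof
  show "fib_blocks d (x + y) = fib_blocks d x + fib_blocks d y" for x y
    by (simp add: fib_blocks_def fun_eq_iff)
  show "m dvd fib_blocks d u j" if u: "\<And>j. j < d \<Longrightarrow> m dvd u j" and j: "j < d" for u j
    using j d
  proof (cases rule: fib_blocks_cases)
    case triple
    then show ?thesis
      using u fib_blocks_triple[of d u] by (auto simp: less_Suc_eq numeral_eq_Suc)
  next
    case (pair a)
    then show ?thesis
      using u[of a] u[of "a + 1"] fib_blocks_pair[OF pair(1,2), of u] by auto
  qed
qed (use fib_blocks_reflects_dvd[OF d] fib_blocks_funpow_fpf[OF d n] in blast)+

lemma prime_dvd_int_le:
  assumes "Factorial_Ring.prime (p::nat)" and "int p dvd c" and "c \<noteq> 0"
  shows "2 \<le> p \<and> int p \<le> \<bar>c\<bar>"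
  using assms dvd_imp_le_int[of c "int p"] prime_ge_2_nat by auto

lemma coprime_prime_power:
  assumes "Factorial_Ring.prime (p::nat)" and "\<not> int p dvd c"
  shows "coprime (int (p ^ r)) c"
  using assms by (simp add: prime_imp_coprime)

lemma fpf_mod_map_order_2:
  assumes p: "Factorial_Ring.prime p" and d: "p = 2 \<or> p = 3 \<longrightarrow> 2 \<le> d"
  shows "\<exists>L. fpf_mod_map L (int (p ^ r)) d 2"
proof (cases "2 \<le> d")
  case True
  then show ?thesis
    by (intro exI[of _ "fib_blocks d"] fpf_mod_map_fib_blocks) simp_all
next
  case False
  then have "\<not> int p dvd 2" and "\<not> int p dvd 3"
    using d prime_dvd_int_le[OF p, of 2] prime_dvd_int_le[OF p, of 3] by auto
  then have "fpf_mod_map (scalar_map 2) (int (p ^ r)) d 2"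
    using p prime_gt_1_nat[OF p] by (intro fpf_mod_map_scalar coprime_prime_power) simp_all
  then show ?thesis
    by blast
qed

lemma fpf_mod_map_order_3:
  assumes p: "Factorial_Ring.prime p" and "p \<noteq> 2"
  shows "\<exists>L. fpf_mod_map L (int (p ^ r)) d 3"
proof -
  have "\<not> int p dvd 2"
    using assms prime_dvd_int_le[OF p, of 2] by auto
  then have "fpf_mod_map (scalar_map (-1)) (int (p ^ r)) d 3"
    using p prime_gt_1_nat[OF p] by (intro fpf_mod_map_scalar coprime_prime_power) simp_all
  then show ?thesis
    by blast
qed

lemma fpf_mod_map_order_5:
  assumes p: "Factorial_Ring.prime p" and d: "p = 2 \<longrightarrow> 2 \<le> d"
  shows "\<exists>L. fpf_mod_map L (int (p ^ r)) d 5"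
proof (cases "p = 2")
  case True
  then have "coprime (int (p ^ r)) 11"
    using p by (intro coprime_prime_power) simp_all
  then show ?thesis
    using True d by (intro exI[of _ "fib_blocks d"] fpf_mod_map_fib_blocks) simp_all
next
  case False
  then have "\<not> int p dvd 2"
    using prime_dvd_int_le[OF p, of 2] by auto
  then have "fpf_mod_map (scalar_map (-1)) (int (p ^ r)) d 5"
    using p prime_gt_1_nat[OF p] by (intro fpf_mod_map_scalar coprime_prime_power) simp_all
  then show ?thesis
    by blast
qed

lemma compatible_order_exists:
  assumes "\<forall>(p, r, d) \<in> set ds. Factorial_Ring.prime p \<and> r \<ge> 1 \<and> d \<ge> 1"
    and "(\<forall>(p, r, d) \<in> set ds. (p = 2 \<or> p = 3) \<longrightarrow> d \<ge> 2)
         \<or> ((\<forall>(p, r, d) \<in> set ds. p \<noteq> 2) \<and> even k)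
         \<or> ((\<forall>(p, r, d) \<in> set ds. p = 2 \<longrightarrow> d \<ge> 2) \<and> (\<exists>s::nat. s \<ge> 1 \<and> k = 4 * s))"
  shows "\<exists>b\<in>{1, 2, 4}. b dvd k
    \<and> (\<forall>p r d. (p, r, d) \<in> set ds \<longrightarrow> (\<exists>L. fpf_mod_map L (int (p ^ r)) d (Suc b)))"
proof -
  have prime: "Factorial_Ring.prime p" if "(p, r, d) \<in> set ds" for p r d
    using bspec[OF assms(1) that] by simp
  show ?thesis
    using assms(2)
  proof (elim disjE conjE exE)
    assume c: "\<forall>(p, r, d) \<in> set ds. (p = 2 \<or> p = 3) \<longrightarrow> d \<ge> 2"
    have "\<exists>L. fpf_mod_map L (int (p ^ r)) d 2" if "(p, r, d) \<in> set ds" for p r d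
      using c that by (intro fpf_mod_map_order_2 prime) auto
    then show ?thesis
      by (intro bexI[of _ 1]) (simp_all add: numeral_2_eq_2)
  next
    assume c: "\<forall>(p, r, d) \<in> set ds. p \<noteq> 2" and "even k"
    have "\<exists>L. fpf_mod_map L (int (p ^ r)) d 3" if "(p, r, d) \<in> set ds" for p r d
      using c that by (intro fpf_mod_map_order_3 prime) auto
    then show ?thesis
      using \<open>even k\<close> by (intro bexI[of _ 2]) (simp_all add: numeral_3_eq_3)
  next
    fix s
    assume c: "\<forall>(p, r, d) \<in> set ds. p = 2 \<longrightarrow> d \<ge> 2" and "k = 4 * s"
    have "\<exists>L. fpf_mod_map L (int (p ^ r)) d 5" if "(p, r, d) \<in> set ds" for p r d
      using c that by (intro fpf_mod_map_order_5 prime) auto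
    moreover have "4 dvd k"
      using \<open>k = 4 * s\<close> by simp
    ultimately show ?thesis
      by (intro bexI[of _ 4]) (simp_all add: eval_nat_numeral)
  qed
qed

theorem mainTheorem1:
  fixes G :: "('a, 'b) monoid_scheme" and k :: nat and ds :: "(nat \<times> nat \<times> nat) list"
  assumes "k \<ge> 1"
    and "comm_group G" and "finite (carrier G)"
    and "G \<cong> prime_power_group ds"
    and "distinct (map (\<lambda>(p, r, d). (p, r)) ds)"
    and "\<forall>(p, r, d) \<in> set ds. Factorial_Ring.prime p \<and> r \<ge> 1 \<and> d \<ge> 1"
    and "(\<forall>(p, r, d) \<in> set ds. (p = 2 \<or> p = 3) \<longrightarrow> d \<ge> 2)
         \<or> ((\<forall>(p, r, d) \<in> set ds. p \<noteq> 2) \<and> even k)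
         \<or> ((\<forall>(p, r, d) \<in> set ds. p = 2 \<longrightarrow> d \<ge> 2) \<and> (\<exists>s::nat. s \<ge> 1 \<and> k = 4 * s))"
  shows "\<exists>\<phi>. \<phi> \<in> iso (wreath_Zk G k) (wreath_Zk G k)
              \<and> reidemeister_number (wreath_Zk G k) \<phi> < \<infinity>"
proof -
  have prime: "Factorial_Ring.prime p" if "(p, r, d) \<in> set ds" for p r d
    using bspec[OF assms(6) that] by simp
  obtain b where b: "b \<in> {1, 2, 4}" and "b dvd k"
    and fpf: "\<forall>p r d. (p, r, d) \<in> set ds \<longrightarrow> (\<exists>L. fpf_mod_map L (int (p ^ r)) d (Suc b))"
    using compatible_order_exists[OF assms(6,7)] by (elim bexE conjE)
  have "0 < p \<and> (\<exists>L. fpf_mod_map L (int (p ^ r)) d (Suc b))" if "(p, r, d) \<in> set ds" for p r d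
    using prime[OF that] fpf that by (simp add: prime_gt_0_nat)
  then have "\<exists>A\<in>iso G G. \<forall>g\<in>carrier G. (A ^^ Suc b) g = g \<longrightarrow> g = \<one>\<^bsub>G\<^esub>"
    by (rule exists_fpf_aut[OF comm_group.axioms(2)[OF assms(2)] assms(4) zero_less_Suc])
  then obtain A where "A \<in> iso G G" and "\<forall>g\<in>carrier G. (A ^^ Suc b) g = g \<longrightarrow> g = \<one>\<^bsub>G\<^esub>"
    by blast
  moreover have "cyclotomic_map (block_diag k b (companion b)) k (Suc b)"
    using cyclotomic_map_companion[OF b] \<open>b dvd k\<close> by (rule cyclotomic_map_block_diag)
  ultimately show ?thesis
    using wreath_Zk_finite_reidemeister assms(2,3) by blast
qed

end
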